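(* Let $I$ be a compact interval, $n\in\mathbb{N}$ and $A_0,A_1,\dots,A_n$ non-empty compact intervals of $\mathbb{R}$. Let $p:I\to\mathcal{K}(\mathbb{R})$ be the polynomial $p(x)=A_0\oplus A_1x\oplus A_2x^2\oplus\cdots\oplus A_nx^n$. Then $\dim_H\mathcal{G}_*(p)=1$.
   Context: $\mathcal{K}(\mathbb{R})$: non-empty compact subsets of $\mathbb{R}$ with Hausdorff distance $\mathfrak{H}$. For compact $A,B$: $\Lambda_A(b)=\{a\in A:|b-a|=\min_{a'\in A}|b-a'|\}$, $\Lambda(A,B)=\{(a,b)\in A\times B:a\in\Lambda_A(b)\text{ or }b\in\Lambda_B(a)\}$; metric chains $\mathrm{Ch}(A_0,\dots,A_n)=\{(a_0,\dots,a_n):(a_j,a_{j+1})\in\Lambda(A_j,A_{j+1})\ \forall j\}$; and $A_0\oplus A_1x\oplus\cdots\oplus A_nx^n=\{\sum_{j=0}^n x^ja_j:(a_0,\dots,a_n)\in\mathrm{Ch}(A_0,\dots,A_n)\}$ (metric linear combination with coefficients $x^j$). $\mathcal{G}_*(p)=\{(x,p(x)):x\in I\}$ with metric $d((x,Y),(y,Z))=|x-y|+\mathfrak{H}(Y,Z)$; $\dim_H$ is Hausdorff dimension. *)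

theory Defs
  imports "HOL-Analysis.Analysis"
begin

definition nearest_pts :: "real set \<Rightarrow> real \<Rightarrow> real set" where
  "nearest_pts A b = {a \<in> A. \<forall>a'\<in>A. \<bar>b - a\<bar> \<le> \<bar>b - a'\<bar>}"

definition metric_pairs :: "real set \<Rightarrow> real set \<Rightarrow> (real \<times> real) set" where
  "metric_pairs A B = {(a, b). a \<in> A \<and> b \<in> B \<and> (a \<in> nearest_pts A b \<or> b \<in> nearest_pts B a)}"

text \<open>Metric chains Ch(A_0,...,A_n), chains represented as functions on {0..n}
  (values outside {0..n} are irrelevant).\<close>
definition metric_chain :: "(nat \<Rightarrow> real set) \<Rightarrow> nat \<Rightarrow> (nat \<Rightarrow> real) \<Rightarrow> bool" where
  "metric_chain A n c \<longleftrightarrow> (\<forall>j\<le>n. c j \<in> A j) \<and>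
     (\<forall>j<n. (c j, c (Suc j)) \<in> metric_pairs (A j) (A (Suc j)))"

definition metric_poly :: "(nat \<Rightarrow> real set) \<Rightarrow> nat \<Rightarrow> real \<Rightarrow> real set" where
  "metric_poly A n x = {(\<Sum>j\<le>n. x ^ j * c j) | c. metric_chain A n c}"

definition diam_wrt :: "('a \<Rightarrow> 'a \<Rightarrow> real) \<Rightarrow> 'a set \<Rightarrow> real" where
  "diam_wrt d U = Sup {d x y | x y. x \<in> U \<and> y \<in> U}"

text \<open>Contribution (diam U)^s of a covering set; the empty set contributes 0,
  and for s = 0 a nonempty set contributes 1 (convention 0^0 = 1).\<close>
definition cover_cost :: "('a \<Rightarrow> 'a \<Rightarrow> real) \<Rightarrow> real \<Rightarrow> 'a set \<Rightarrow> ennreal" where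
  "cover_cost d s U = (if U = {} then 0 else if s = 0 then 1 else ennreal (diam_wrt d U powr s))"

definition hausdorff_pre_measure ::
  "('a \<Rightarrow> 'a \<Rightarrow> real) \<Rightarrow> real \<Rightarrow> real \<Rightarrow> 'a set \<Rightarrow> ennreal" where
  "hausdorff_pre_measure d s \<delta> S =
     Inf {(\<Sum>i. cover_cost d s (U i)) | U :: nat \<Rightarrow> 'a set.
            S \<subseteq> (\<Union>i. U i) \<and> (\<forall>i. \<forall>x\<in>U i. \<forall>y\<in>U i. d x y \<le> \<delta>)}"

definition hausdorff_measure :: "('a \<Rightarrow> 'a \<Rightarrow> real) \<Rightarrow> real \<Rightarrow> 'a set \<Rightarrow> ennreal" where
  "hausdorff_measure d s S = (SUP \<delta>\<in>{0<..}. hausdorff_pre_measure d s \<delta> S)"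

definition hausdorff_dim :: "('a \<Rightarrow> 'a \<Rightarrow> real) \<Rightarrow> 'a set \<Rightarrow> ereal" where
  "hausdorff_dim d S = Inf {ereal s | s. 0 \<le> s \<and> hausdorff_measure d s S = 0}"

definition hausdorff_dist :: "real set \<Rightarrow> real set \<Rightarrow> real" where
  "hausdorff_dist A B = max (SUP a\<in>A. infdist a B) (SUP b\<in>B. infdist b A)"

definition graph_dist :: "real \<times> real set \<Rightarrow> real \<times> real set \<Rightarrow> real" where
  "graph_dist P Q = \<bar>fst P - fst Q\<bar> + hausdorff_dist (snd P) (snd Q)"

definition set_graph :: "real set \<Rightarrow> (real \<Rightarrow> real set) \<Rightarrow> (real \<times> real set) set" where
  "set_graph I p = {(x, p x) | x. x \<in> I}"

end

theory Submission
  imports Defs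
begin

text \<open>The map g x = (x, p(x)) is bi-Lipschitz on I. The lower bound comes from the first
  coordinate. For the upper bound, a metric chain (a_0, ..., a_n) does not depend on x: it
  represents the point \<Sum> x^j a_j of p(x) and the point \<Sum> y^j a_j of p(y), which differ by at
  most L|x - y| for a constant L depending only on I and the A_j, so the Hausdorff distance of
  p(x) and p(y) is at most L|x - y|. A bi-Lipschitz image of an interval has dimension 1:
  covering it by the images of subintervals of length h \<rightarrow> 0 shows that its s-dimensional measure vanishes for
  s > 1, and pulling any cover by small sets back to I shows that its s-dimensional measure is
  at least |I| for s \<le> 1.\<close>

lemma abs_power_diff_le:
  fixes x y M :: real
  assumes "\<bar>x\<bar> \<le> M" "\<bar>y\<bar> \<le> M"
  shows "\<bar>x ^ j - y ^ j\<bar> \<le> real j * M ^ (j - 1) * \<bar>x - y\<bar>"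
  \<comment> \<open>for j = 0 the truncated exponent is harmless, the factor j vanishes\<close>
proof (induction j)
  case 0
  then show ?case by simp
next
  case (Suc j)
  have "\<bar>x ^ Suc j - y ^ Suc j\<bar> = \<bar>x * (x ^ j - y ^ j) + y ^ j * (x - y)\<bar>"
    by (simp add: algebra_simps)
  also have "\<dots> \<le> \<bar>x\<bar> * \<bar>x ^ j - y ^ j\<bar> + \<bar>y\<bar> ^ j * \<bar>x - y\<bar>"
    unfolding abs_mult[symmetric] power_abs[symmetric] by (rule abs_triangle_ineq)
  also have "\<dots> \<le> M * (real j * M ^ (j - 1) * \<bar>x - y\<bar>) + M ^ j * \<bar>x - y\<bar>"
    using Suc assms by (intro add_mono mult_mono power_mono) auto
  also have "\<dots> = real (Suc j) * M ^ (Suc j - 1) * \<bar>x - y\<bar>"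
    by (cases j) (auto simp: algebra_simps)
  finally show ?case .
qed

lemma abs_sum_power_mult_diff_le:
  fixes x y M :: real and c R :: "nat \<Rightarrow> real"
  assumes "\<And>j. j \<le> n \<Longrightarrow> \<bar>c j\<bar> \<le> R j" "\<bar>x\<bar> \<le> M" "\<bar>y\<bar> \<le> M"
  shows "\<bar>(\<Sum>j\<le>n. x ^ j * c j) - (\<Sum>j\<le>n. y ^ j * c j)\<bar>
           \<le> (\<Sum>j\<le>n. R j * real j * M ^ (j - 1)) * \<bar>x - y\<bar>"
proof -
  have "\<bar>(\<Sum>j\<le>n. x ^ j * c j) - (\<Sum>j\<le>n. y ^ j * c j)\<bar> = \<bar>\<Sum>j\<le>n. (x ^ j - y ^ j) * c j\<bar>"
    by (simp add: sum_subtractf algebra_simps)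
  also have "\<dots> \<le> (\<Sum>j\<le>n. \<bar>x ^ j - y ^ j\<bar> * \<bar>c j\<bar>)"
    unfolding abs_mult[symmetric] by (rule sum_abs)
  also have "\<dots> \<le> (\<Sum>j\<le>n. (real j * M ^ (j - 1) * \<bar>x - y\<bar>) * R j)"
    using assms abs_power_diff_le by (intro sum_mono mult_mono) auto
  also have "\<dots> = (\<Sum>j\<le>n. R j * real j * M ^ (j - 1)) * \<bar>x - y\<bar>"
    by (subst sum_distrib_right) (simp add: mult_ac)
  finally show ?thesis .
qed

lemma nearest_pts_nonempty:
  assumes "closed A" "A \<noteq> {}"
  shows "nearest_pts A b \<noteq> {}"
proof -
  obtain a where "a \<in> A" "\<And>a'. a' \<in> A \<Longrightarrow> dist b a \<le> dist b a'"
    using distance_attains_inf[OF assms] by metis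
  then show ?thesis
    unfolding nearest_pts_def dist_real_def by blast
qed

lemma metric_chain_exists:
  assumes "\<And>j. j \<le> n \<Longrightarrow> closed (A j) \<and> A j \<noteq> {}"
  shows "\<exists>c. metric_chain A n c"
  using assms
proof (induction n)
  case 0
  then obtain a where "a \<in> A 0" by fastforce
  then have "metric_chain A 0 (\<lambda>_. a)"
    unfolding metric_chain_def by simp
  then show ?case by blast
next
  case (Suc n)
  then obtain c where c: "metric_chain A n c"
    by (metis le_SucI)
  have "nearest_pts (A (Suc n)) (c n) \<noteq> {}"
    using Suc.prems[of "Suc n"] by (intro nearest_pts_nonempty) auto
  then obtain p where p: "p \<in> nearest_pts (A (Suc n)) (c n)"
    by blast
  have p_mem: "p \<in> A (Suc n)"
    using p unfolding nearest_pts_def by blast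
  have last_pair: "(c n, p) \<in> metric_pairs (A n) (A (Suc n))"
    using c p p_mem unfolding metric_chain_def metric_pairs_def by simp
  have "metric_chain A (Suc n) (c(Suc n := p))"
    using c p_mem last_pair unfolding metric_chain_def le_Suc_eq less_Suc_eq by auto
  then show ?case by blast
qed

lemma metric_poly_nonempty:
  assumes "\<And>j. j \<le> n \<Longrightarrow> closed (A j) \<and> A j \<noteq> {}"
  shows "metric_poly A n x \<noteq> {}"
  using metric_chain_exists[OF assms] unfolding metric_poly_def by auto

lemma metric_poly_near:
  fixes x y M :: real and R :: "nat \<Rightarrow> real"
  assumes "\<And>j a. j \<le> n \<Longrightarrow> a \<in> A j \<Longrightarrow> \<bar>a\<bar> \<le> R j" "\<bar>x\<bar> \<le> M" "\<bar>y\<bar> \<le> M"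
    and "z \<in> metric_poly A n x"
  shows "\<exists>z'\<in>metric_poly A n y. \<bar>z - z'\<bar> \<le> (\<Sum>j\<le>n. R j * real j * M ^ (j - 1)) * \<bar>x - y\<bar>"
proof -
  obtain c where c: "metric_chain A n c" and z: "z = (\<Sum>j\<le>n. x ^ j * c j)"
    using assms(4) unfolding metric_poly_def by blast
  have "\<bar>c j\<bar> \<le> R j" if "j \<le> n" for j
    using assms(1) c that unfolding metric_chain_def by simp
  then have "\<bar>z - (\<Sum>j\<le>n. y ^ j * c j)\<bar> \<le> (\<Sum>j\<le>n. R j * real j * M ^ (j - 1)) * \<bar>x - y\<bar>"
    unfolding z using assms(2,3) by (rule abs_sum_power_mult_diff_le)
  moreover have "(\<Sum>j\<le>n. y ^ j * c j) \<in> metric_poly A n y"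
    using c unfolding metric_poly_def by blast
  ultimately show ?thesis ..
qed

lemma SUP_infdist_in_interval:
  fixes A B :: "real set"
  assumes "A \<noteq> {}" "\<And>a. a \<in> A \<Longrightarrow> \<exists>b\<in>B. \<bar>a - b\<bar> \<le> K"
  shows "(SUP a\<in>A. infdist a B) \<in> {0..K}"
proof -
  have le: "infdist a B \<le> K" if "a \<in> A" for a
    using assms(2)[OF that] infdist_le[of _ B a] unfolding dist_real_def by force
  obtain a0 where "a0 \<in> A"
    using assms(1) by blast
  moreover have "bdd_above ((\<lambda>a. infdist a B) ` A)"
    using le by (intro bdd_aboveI2) auto
  ultimately have "infdist a0 B \<le> (SUP a\<in>A. infdist a B)"
    by (intro cSUP_upper)
  moreover have "(SUP a\<in>A. infdist a B) \<le> K"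
    using assms(1) le by (intro cSUP_least) auto
  ultimately show ?thesis
    using infdist_nonneg[of a0 B] by simp
qed

lemma hausdorff_dist_in_interval:
  fixes A B :: "real set"
  assumes "A \<noteq> {}" "B \<noteq> {}"
    and "\<And>a. a \<in> A \<Longrightarrow> \<exists>b\<in>B. \<bar>a - b\<bar> \<le> K" "\<And>b. b \<in> B \<Longrightarrow> \<exists>a\<in>A. \<bar>b - a\<bar> \<le> K"
  shows "hausdorff_dist A B \<in> {0..K}"
  using SUP_infdist_in_interval[of A B K] SUP_infdist_in_interval[of B A K] assms
  unfolding hausdorff_dist_def by auto

lemma hausdorff_dist_metric_poly_bounds:
  fixes x y M :: real and R :: "nat \<Rightarrow> real"
  assumes "\<And>j. j \<le> n \<Longrightarrow> closed (A j) \<and> A j \<noteq> {}"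
    and "\<And>j a. j \<le> n \<Longrightarrow> a \<in> A j \<Longrightarrow> \<bar>a\<bar> \<le> R j" "\<bar>x\<bar> \<le> M" "\<bar>y\<bar> \<le> M"
  shows "hausdorff_dist (metric_poly A n x) (metric_poly A n y)
           \<in> {0..(\<Sum>j\<le>n. R j * real j * M ^ (j - 1)) * \<bar>x - y\<bar>}"
  using metric_poly_near[OF assms(2-4)] metric_poly_near[OF assms(2,4,3)]
  by (intro hausdorff_dist_in_interval metric_poly_nonempty assms(1)) (auto simp: abs_minus_commute)

lemma diam_wrt_le:
  assumes "U \<noteq> {}" "\<And>p q. p \<in> U \<Longrightarrow> q \<in> U \<Longrightarrow> d p q \<le> r"
  shows "diam_wrt d U \<le> r"
  unfolding diam_wrt_def using assms by (intro cSup_least) blast+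

lemma diam_wrt_ge:
  assumes "\<And>p q. p \<in> U \<Longrightarrow> q \<in> U \<Longrightarrow> d p q \<le> r" "p \<in> U" "q \<in> U"
  shows "d p q \<le> diam_wrt d U"
proof -
  have "bdd_above {d x y | x y. x \<in> U \<and> y \<in> U}"
    using assms(1) by (intro bdd_aboveI[of _ r]) auto
  then show ?thesis
    unfolding diam_wrt_def using assms(2,3) by (intro cSup_upper) auto
qed

lemma hausdorff_pre_measure_le:
  assumes "S \<subseteq> (\<Union>i. U i)" "\<And>i x y. x \<in> U i \<Longrightarrow> y \<in> U i \<Longrightarrow> d x y \<le> \<delta>"
  shows "hausdorff_pre_measure d s \<delta> S \<le> (\<Sum>i. cover_cost d s (U i))"
  unfolding hausdorff_pre_measure_def using assms by (intro Inf_lower) blast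

lemma hausdorff_pre_measure_Lipschitz_image_le:
  fixes g :: "real \<Rightarrow> 'b" and d :: "'b \<Rightarrow> 'b \<Rightarrow> real"
  assumes lip: "\<And>x y. x \<in> {a..b} \<Longrightarrow> y \<in> {a..b} \<Longrightarrow>
                  0 \<le> d (g x) (g y) \<and> d (g x) (g y) \<le> K * \<bar>x - y\<bar>"
    and "a \<le> b" "0 \<le> K" "0 < h" "K * h \<le> \<delta>" "0 < s"
  shows "hausdorff_pre_measure d s \<delta> (g ` {a..b}) \<le> ennreal (((b - a) / h + 1) * (K * h) powr s)"
proof -
  define idx where "idx x = nat \<lfloor>(x - a) / h\<rfloor>" for x
  define U where "U k = g ` {x \<in> {a..b}. idx x = k}" for k
  define N where "N = nat \<lfloor>(b - a) / h\<rfloor>"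
  have same_piece: "\<bar>x - y\<bar> \<le> h" if "x \<in> {a..b}" "y \<in> {a..b}" "idx x = idx y" for x y
  proof -
    have "\<lfloor>(x - a) / h\<rfloor> = \<lfloor>(y - a) / h\<rfloor>"
      using that \<open>0 < h\<close> unfolding idx_def by (simp add: eq_nat_nat_iff)
    then have "\<bar>(x - a) / h - (y - a) / h\<bar> < 1"
      using floor_correct[of "(x - a) / h"] floor_correct[of "(y - a) / h"] by linarith
    also have "(x - a) / h - (y - a) / h = (x - y) / h"
      by (simp add: diff_divide_distrib)
    finally show ?thesis
      using \<open>0 < h\<close> by (simp add: abs_divide)
  qed
  have U_dist: "d p q \<le> K * h" if pq: "p \<in> U k" "q \<in> U k" for k p q
  proof -
    obtain x y where xy: "x \<in> {a..b}" "y \<in> {a..b}" "idx x = k" "idx y = k" "p = g x" "q = g y"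
      using pq unfolding U_def by blast
    then have "d p q \<le> K * \<bar>x - y\<bar>"
      using lip[OF xy(1,2)] by simp
    also have "\<dots> \<le> K * h"
      using same_piece[OF xy(1,2)] xy(3,4) \<open>0 \<le> K\<close> by (simp add: mult_left_mono)
    finally show ?thesis .
  qed
  have U_empty: "U k = {}" if "N < k" for k
  proof -
    have "idx x \<le> N" if "x \<in> {a..b}" for x
      using that \<open>0 < h\<close> unfolding idx_def N_def
      by (intro nat_mono floor_mono divide_right_mono) auto
    then show ?thesis
      using \<open>N < k\<close> unfolding U_def by fastforce
  qed
  have cost: "cover_cost d s (U k) \<le> ennreal ((K * h) powr s)" for k
  proof (cases "U k = {}")
    case False
    then obtain p where p: "p \<in> U k" by blast
    have "0 \<le> d p p"
      using p lip unfolding U_def by blast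
    also have "\<dots> \<le> diam_wrt d (U k)"
      by (rule diam_wrt_ge[OF U_dist p p])
    finally have "diam_wrt d (U k) powr s \<le> (K * h) powr s"
      using False U_dist \<open>0 < s\<close> by (intro powr_mono2 diam_wrt_le) auto
    then show ?thesis
      unfolding cover_cost_def using False \<open>0 < s\<close> by (simp add: ennreal_leI)
  qed (simp add: cover_cost_def)
  have "g ` {a..b} \<subseteq> (\<Union>k. U k)"
    unfolding U_def by blast
  then have "hausdorff_pre_measure d s \<delta> (g ` {a..b}) \<le> (\<Sum>k. cover_cost d s (U k))"
    using U_dist \<open>K * h \<le> \<delta>\<close> by (intro hausdorff_pre_measure_le) force+
  also have "\<dots> = (\<Sum>k\<le>N. cover_cost d s (U k))"
    using U_empty by (intro suminf_finite) (auto simp: cover_cost_def)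
  also have "\<dots> \<le> (\<Sum>k\<le>N. ennreal ((K * h) powr s))"
    using cost by (rule sum_mono)
  also have "\<dots> = ennreal ((real N + 1) * (K * h) powr s)"
    by (simp add: ennreal_mult' ennreal_of_nat_eq_real_of_nat add.commute)
  also have "\<dots> \<le> ennreal (((b - a) / h + 1) * (K * h) powr s)"
    using \<open>a \<le> b\<close> \<open>0 < h\<close> unfolding N_def
    by (intro ennreal_leI mult_right_mono add_right_mono) auto
  finally show ?thesis .
qed

lemma hausdorff_measure_Lipschitz_image_eq_0:
  fixes g :: "real \<Rightarrow> 'b" and d :: "'b \<Rightarrow> 'b \<Rightarrow> real"
  assumes lip: "\<And>x y. x \<in> {a..b} \<Longrightarrow> y \<in> {a..b} \<Longrightarrow>
                  0 \<le> d (g x) (g y) \<and> d (g x) (g y) \<le> K * \<bar>x - y\<bar>"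
    and "a \<le> b" "0 \<le> K" "1 < s"
  shows "hausdorff_measure d s (g ` {a..b}) = 0"
proof -
  define f where "f h = K powr s * ((b - a) * h powr (s - 1) + h powr s)" for h
  have f_eq: "((b - a) / h + 1) * (K * h) powr s = f h" if "0 < h" for h
    using that \<open>0 \<le> K\<close> unfolding f_def by (simp add: powr_mult powr_diff field_simps)
  have nonneg: "\<forall>\<^sub>F h in at_right 0. (0::real) \<le> h"
    using eventually_at_right_less by (rule eventually_mono) simp
  have "((\<lambda>h. h powr p) \<longlongrightarrow> 0) (at_right 0)" if "0 < p" for p :: real
    by (rule tendsto_zero_powrI) (rule tendsto_ident_at tendsto_const nonneg that)+
  then have "(f \<longlongrightarrow> K powr s * ((b - a) * 0 + 0)) (at_right 0)"
    unfolding f_def using \<open>1 < s\<close> by (intro tendsto_intros) auto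
  then have f_lim: "(f \<longlongrightarrow> 0) (at_right 0)"
    by simp
  have bound: "hausdorff_pre_measure d s \<delta> (g ` {a..b}) \<le> ennreal e"
    if "0 < \<delta>" "0 < e" for \<delta> e
  proof -
    have "\<forall>\<^sub>F h in at_right 0. f h < e"
      using f_lim \<open>0 < e\<close> by (rule order_tendstoD(2))
    moreover have "((\<lambda>h. K * h) \<longlongrightarrow> K * 0) (at_right 0)"
      by (intro tendsto_intros)
    then have "\<forall>\<^sub>F h in at_right 0. K * h < \<delta>"
      using \<open>0 < \<delta>\<close> by (intro order_tendstoD(2)) auto
    moreover have "\<forall>\<^sub>F h in at_right 0. (0::real) < h"
      by (rule eventually_at_right_less)
    ultimately have "\<forall>\<^sub>F h in at_right 0. 0 < h \<and> K * h < \<delta> \<and> f h < e"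
      by eventually_elim simp
    moreover have "at_right (0::real) \<noteq> bot"
      by simp
    ultimately obtain h where h: "0 < h" "K * h < \<delta>" "f h < e"
      using eventually_happens' by blast
    have "hausdorff_pre_measure d s \<delta> (g ` {a..b}) \<le> ennreal (((b - a) / h + 1) * (K * h) powr s)"
      using h \<open>1 < s\<close> \<open>a \<le> b\<close> \<open>0 \<le> K\<close>
      by (intro hausdorff_pre_measure_Lipschitz_image_le[where g = g and K = K] lip) auto
    also have "\<dots> \<le> ennreal e"
      using h f_eq[OF \<open>0 < h\<close>] by (intro ennreal_leI) simp
    finally show ?thesis .
  qed
  have "hausdorff_pre_measure d s \<delta> (g ` {a..b}) = 0" if "0 < \<delta>" for \<delta>
  proof -
    have "hausdorff_pre_measure d s \<delta> (g ` {a..b}) \<le> 0"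
      by (rule ennreal_le_epsilon) (simp add: bound \<open>0 < \<delta>\<close>)
    then show ?thesis
      by simp
  qed
  then show ?thesis
    unfolding hausdorff_measure_def by simp
qed

lemma subset_Inf_interval:
  fixes W :: "real set"
  assumes "W \<noteq> {}" "bdd_below W" "\<And>x y. x \<in> W \<Longrightarrow> y \<in> W \<Longrightarrow> \<bar>x - y\<bar> \<le> D"
  shows "W \<subseteq> {Inf W..Inf W + D}"
proof
  fix w assume "w \<in> W"
  have "w - D \<le> Inf W"
  proof (rule cInf_greatest[OF \<open>W \<noteq> {}\<close>])
    fix y assume "y \<in> W"
    then show "w - D \<le> y"
      using assms(3)[OF \<open>w \<in> W\<close> \<open>y \<in> W\<close>] by (simp add: abs_le_iff)
  qed
  then show "w \<in> {Inf W..Inf W + D}"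
    using cInf_lower[OF \<open>w \<in> W\<close> assms(2)] by simp
qed

lemma preimage_cover_in_interval:
  fixes g :: "real \<Rightarrow> 'b" and d :: "'b \<Rightarrow> 'b \<Rightarrow> real"
  assumes expand: "\<And>x y. x \<in> {a..b} \<Longrightarrow> y \<in> {a..b} \<Longrightarrow> \<bar>x - y\<bar> \<le> d (g x) (g y)"
    and small: "\<And>p q. p \<in> U \<Longrightarrow> q \<in> U \<Longrightarrow> d p q \<le> 1" and "s \<le> 1"
  obtains J where "J \<in> sets lborel" "{x \<in> {a..b}. g x \<in> U} \<subseteq> J"
    "emeasure lborel J \<le> cover_cost d s U"
proof (cases "{x \<in> {a..b}. g x \<in> U} = {}")
  case True
  then show ?thesis
    using that[of "{}"] by simp
next
  case False
  define W where "W = {x \<in> {a..b}. g x \<in> U}"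
  define D where "D = diam_wrt d U"
  have W_dist: "\<bar>x - y\<bar> \<le> D" if "x \<in> W" "y \<in> W" for x y
  proof -
    have "\<bar>x - y\<bar> \<le> d (g x) (g y)"
      using expand that unfolding W_def by blast
    also have "\<dots> \<le> D"
      unfolding D_def using that unfolding W_def by (intro diam_wrt_ge[OF small]) auto
    finally show ?thesis .
  qed
  have "U \<noteq> {}"
    using False by blast
  have "0 \<le> D"
    using False W_dist unfolding W_def by fastforce
  moreover have "D \<le> 1"
    unfolding D_def using \<open>U \<noteq> {}\<close> small by (rule diam_wrt_le)
  ultimately have "D \<le> D powr s"
    using powr_mono'[of s 1 D] \<open>s \<le> 1\<close> by simp
  with \<open>D \<le> 1\<close> have "ennreal D \<le> cover_cost d s U"
    using \<open>U \<noteq> {}\<close> unfolding cover_cost_def D_def by (auto intro: ennreal_leI)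
  moreover have "W \<subseteq> {Inf W..Inf W + D}"
    using False W_dist unfolding W_def by (intro subset_Inf_interval) (auto intro: bdd_belowI[of _ a])
  ultimately show ?thesis
    using that[of "{Inf W..Inf W + D}"] \<open>0 \<le> D\<close> unfolding W_def by simp
qed

lemma length_le_hausdorff_measure_expanding_image:
  fixes g :: "real \<Rightarrow> 'b" and d :: "'b \<Rightarrow> 'b \<Rightarrow> real"
  assumes expand: "\<And>x y. x \<in> {a..b} \<Longrightarrow> y \<in> {a..b} \<Longrightarrow> \<bar>x - y\<bar> \<le> d (g x) (g y)"
    and "s \<le> 1"
  shows "ennreal (b - a) \<le> hausdorff_measure d s (g ` {a..b})"
proof -
  have "ennreal (b - a) \<le> (\<Sum>i. cover_cost d s (U i))"
    if cover: "g ` {a..b} \<subseteq> (\<Union>i. U i)" and small: "\<forall>i. \<forall>p\<in>U i. \<forall>q\<in>U i. d p q \<le> 1"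
    for U :: "nat \<Rightarrow> 'b set"
  proof -
    have "\<forall>i. \<exists>J. J \<in> sets lborel \<and> {x \<in> {a..b}. g x \<in> U i} \<subseteq> J
               \<and> emeasure lborel J \<le> cover_cost d s (U i)"
    proof
      fix i
      have small_i: "\<And>p q. p \<in> U i \<Longrightarrow> q \<in> U i \<Longrightarrow> d p q \<le> 1"
        using small by blast
      obtain J where "J \<in> sets lborel" "{x \<in> {a..b}. g x \<in> U i} \<subseteq> J"
        "emeasure lborel J \<le> cover_cost d s (U i)"
        by (rule preimage_cover_in_interval[where g = g and d = d, OF expand small_i \<open>s \<le> 1\<close>])
      then show "\<exists>J. J \<in> sets lborel \<and> {x \<in> {a..b}. g x \<in> U i} \<subseteq> J
               \<and> emeasure lborel J \<le> cover_cost d s (U i)"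
        by blast
    qed
    then obtain J where J: "\<And>i. J i \<in> sets lborel" "\<And>i. {x \<in> {a..b}. g x \<in> U i} \<subseteq> J i"
      "\<And>i. emeasure lborel (J i) \<le> cover_cost d s (U i)"
      unfolding choice_iff by blast
    have "ennreal (b - a) \<le> emeasure lborel {a..b}"
      by (cases "a \<le> b") (auto simp: ennreal_neg)
    also have "\<dots> \<le> emeasure lborel (\<Union>i. J i)"
    proof (rule emeasure_mono)
      show "{a..b} \<subseteq> (\<Union>i. J i)"
      proof
        fix x assume "x \<in> {a..b}"
        then obtain i where "g x \<in> U i"
          using cover by blast
        then show "x \<in> (\<Union>i. J i)"
          using J(2)[of i] \<open>x \<in> {a..b}\<close> by blast
      qed
      show "(\<Union>i. J i) \<in> sets lborel"
        using J(1) by (intro sets.countable_UN) auto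
    qed
    also have "\<dots> \<le> (\<Sum>i. emeasure lborel (J i))"
      by (rule emeasure_subadditive_countably) (use J(1) in auto)
    also have "\<dots> \<le> (\<Sum>i. cover_cost d s (U i))"
      using J(3) by (intro suminf_le) auto
    finally show ?thesis .
  qed
  then have "ennreal (b - a) \<le> hausdorff_pre_measure d s 1 (g ` {a..b})"
    unfolding hausdorff_pre_measure_def by (intro Inf_greatest) blast
  also have "\<dots> \<le> hausdorff_measure d s (g ` {a..b})"
    unfolding hausdorff_measure_def by (rule SUP_upper) simp
  finally show ?thesis .
qed

lemma hausdorff_dim_eqI:
  assumes "0 \<le> t"
    and "\<And>s. t < s \<Longrightarrow> hausdorff_measure d s S = 0"
    and "\<And>s. 0 \<le> s \<Longrightarrow> s < t \<Longrightarrow> hausdorff_measure d s S \<noteq> 0"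
  shows "hausdorff_dim d S = ereal t"
  unfolding hausdorff_dim_def
proof (rule antisym)
  show "Inf {ereal s | s. 0 \<le> s \<and> hausdorff_measure d s S = 0} \<le> ereal t"
  proof (rule dense_ge)
    fix r :: ereal assume "ereal t < r"
    then show "Inf {ereal s | s. 0 \<le> s \<and> hausdorff_measure d s S = 0} \<le> r"
      using assms(1,2) by (cases r) (auto intro!: Inf_lower)
  qed
  show "ereal t \<le> Inf {ereal s | s. 0 \<le> s \<and> hausdorff_measure d s S = 0}"
    using assms(3) by (intro Inf_greatest) (auto simp: not_less[symmetric])
qed

lemma hausdorff_dim_bi_Lipschitz_image_interval:
  fixes g :: "real \<Rightarrow> 'b" and d :: "'b \<Rightarrow> 'b \<Rightarrow> real"
  assumes "a < b"
    and bi_Lipschitz: "\<And>x y. x \<in> {a..b} \<Longrightarrow> y \<in> {a..b} \<Longrightarrow>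
                         \<bar>x - y\<bar> \<le> d (g x) (g y) \<and> d (g x) (g y) \<le> K * \<bar>x - y\<bar>"
  shows "hausdorff_dim d (g ` {a..b}) = 1"
proof -
  have "0 < K * (b - a)"
    using bi_Lipschitz[of a b] \<open>a < b\<close> by auto
  then have "0 \<le> K"
    using \<open>a < b\<close> by (simp add: zero_less_mult_iff)
  have "hausdorff_dim d (g ` {a..b}) = ereal 1"
  proof (rule hausdorff_dim_eqI)
    show "hausdorff_measure d s (g ` {a..b}) = 0" if "1 < s" for s
    proof (rule hausdorff_measure_Lipschitz_image_eq_0)
      fix x y assume "x \<in> {a..b}" "y \<in> {a..b}"
      then show "0 \<le> d (g x) (g y) \<and> d (g x) (g y) \<le> K * \<bar>x - y\<bar>"
        using bi_Lipschitz[of x y] abs_ge_zero[of "x - y"] by linarith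
    qed (use \<open>a < b\<close> \<open>0 \<le> K\<close> that in auto)
    show "hausdorff_measure d s (g ` {a..b}) \<noteq> 0" if "s < 1" for s
    proof -
      have "0 < ennreal (b - a)"
        using \<open>a < b\<close> by simp
      also have "\<dots> \<le> hausdorff_measure d s (g ` {a..b})"
        using bi_Lipschitz that by (intro length_le_hausdorff_measure_expanding_image) auto
      finally show ?thesis
        by simp
    qed
  qed simp
  then show ?thesis
    by (simp add: one_ereal_def)
qed

theorem theorem4p12:
  fixes a b :: real and n :: nat and l u :: "nat \<Rightarrow> real"
  assumes "a < b"
    and "\<And>j. j \<le> n \<Longrightarrow> l j \<le> u j"
  shows "hausdorff_dim graph_dist
           (set_graph {a..b} (metric_poly (\<lambda>j. {l j..u j}) n)) = 1"
proof -
  define P where "P = metric_poly (\<lambda>j. {l j..u j}) n"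
  define M where "M = max \<bar>a\<bar> \<bar>b\<bar>"
  define L where "L = (\<Sum>j\<le>n. (\<bar>l j\<bar> + \<bar>u j\<bar>) * real j * M ^ (j - 1))"
  define g where "g x = (x, P x)" for x
  have "\<bar>x - y\<bar> \<le> graph_dist (g x) (g y) \<and> graph_dist (g x) (g y) \<le> (1 + L) * \<bar>x - y\<bar>"
    if "x \<in> {a..b}" "y \<in> {a..b}" for x y
  proof -
    have "hausdorff_dist (P x) (P y) \<in> {0..L * \<bar>x - y\<bar>}"
      unfolding P_def L_def using assms(2) that
      by (intro hausdorff_dist_metric_poly_bounds) (auto simp: M_def)
    then show ?thesis
      unfolding graph_dist_def g_def by (simp add: algebra_simps)
  qed
  then have "hausdorff_dim graph_dist (g ` {a..b}) = 1"
    by (rule hausdorff_dim_bi_Lipschitz_image_interval[OF \<open>a < b\<close>])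
  moreover have "set_graph {a..b} P = g ` {a..b}"
    unfolding set_graph_def g_def by auto
  ultimately show ?thesis
    unfolding P_def by simp
qed

end
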